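(* Let $V\neq\emptyset$, let $F\colon V\leadsto V$ be a connected simple graph multifunction and let $v\in V$. Then $\mathrm{Wall}_{\mathrm{Leaf}_{v}(F,V)}(F,V)$ is Cauchy in $(V,d_F)$, and if $|V\setminus\mathrm{Leaf}_{v}(F,V)|<\aleph_0=|V|$ then $\mathrm{Wall}_{\aleph_0}(F,V)$ is Cauchy in $(V,d_F)$.
   Context: $\mathbb{N}=\{0,1,2,\dots\}$. A multifunction $F\colon V\leadsto V$ is a map $V\to P(V)$; it is a simple graph multifunction if $w\notin F(w)$ for all $w$ and $u\in F(w)\iff w\in F(u)$. Iterates: $F^{0\cup}(w)=\{w\}$, $F^{n\cup}(w)=\bigcup_{a\in F^{(n-1)\cup}(w)}F(a)$ for $n\ge1$. $F$ is connected if for all $u,w\in V$ there is $n\ge0$ with $u\in F^{n\cup}(w)$ (equivalently, a walk $u=\alpha_1,\dots,\alpha_{n+1}=w$ with $\alpha_i\in F(\alpha_{i+1})$). For connected $F$, $d_F(u,w)=\min\{n\in\mathbb{N}\mid u\in F^{n\cup}(w)\}$ is a metric on $V$. For $B\subset V$, $F_{+}(B)=\{x\mid F(x)\subset B\}$; $\mathrm{Leaf}_{v}(F,V)=\{w\in V\mid F(w)=\{v\}\}$; $\mathrm{Wall}_{A}(F,V)=\{U\subset V\mid A\subset F_{+}(U)\}$; $\mathrm{Wall}_{\aleph_0}(F,V)=\{U\subset V\mid |V\setminus F_{+}(U)|<\aleph_0\}$. A family $\Phi\subset P(V)$ is Cauchy in $(V,d_F)$ if for every $\varepsilon>0$ there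 is $M\in\Phi$ with $\mathrm{diam}(M)=\sup_{u,w\in M}d_F(u,w)<\varepsilon$. *)

theory Defs
  imports "HOL-Analysis.Analysis"
begin

definition multifunction :: "'a set \<Rightarrow> ('a \<Rightarrow> 'a set) \<Rightarrow> bool" where
  "multifunction V F \<longleftrightarrow> (\<forall>w\<in>V. F w \<subseteq> V)"

definition simple_graph_mf :: "'a set \<Rightarrow> ('a \<Rightarrow> 'a set) \<Rightarrow> bool" where
  "simple_graph_mf V F \<longleftrightarrow> multifunction V F \<and> (\<forall>w\<in>V. w \<notin> F w)
     \<and> (\<forall>u\<in>V. \<forall>w\<in>V. u \<in> F w \<longleftrightarrow> w \<in> F u)"

primrec mf_iter :: "('a \<Rightarrow> 'a set) \<Rightarrow> nat \<Rightarrow> 'a \<Rightarrow> 'a set" where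
  "mf_iter F 0 w = {w}"
| "mf_iter F (Suc n) w = (\<Union>a\<in>mf_iter F n w. F a)"

definition connected_mf :: "'a set \<Rightarrow> ('a \<Rightarrow> 'a set) \<Rightarrow> bool" where
  "connected_mf V F \<longleftrightarrow> (\<forall>u\<in>V. \<forall>w\<in>V. \<exists>n. u \<in> mf_iter F n w)"

definition dist_mf :: "('a \<Rightarrow> 'a set) \<Rightarrow> 'a \<Rightarrow> 'a \<Rightarrow> nat" where
  "dist_mf F u w = (LEAST n. u \<in> mf_iter F n w)"

definition diam_mf :: "('a \<Rightarrow> 'a set) \<Rightarrow> 'a set \<Rightarrow> ereal" where
  "diam_mf F M = (SUP p\<in>M \<times> M. ereal (real (dist_mf F (fst p) (snd p))))"

definition upper_inv :: "'a set \<Rightarrow> ('a \<Rightarrow> 'a set) \<Rightarrow> 'a set \<Rightarrow> 'a set" where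
  "upper_inv V F B = {x\<in>V. F x \<subseteq> B}"

definition Leaf :: "'a set \<Rightarrow> ('a \<Rightarrow> 'a set) \<Rightarrow> 'a \<Rightarrow> 'a set" where
  "Leaf V F v = {w\<in>V. F w = {v}}"

definition Wall :: "'a set \<Rightarrow> ('a \<Rightarrow> 'a set) \<Rightarrow> 'a set \<Rightarrow> 'a set set" where
  "Wall V F A = {U. U \<subseteq> V \<and> A \<subseteq> upper_inv V F U}"

definition Wall_aleph0 :: "'a set \<Rightarrow> ('a \<Rightarrow> 'a set) \<Rightarrow> 'a set set" where
  "Wall_aleph0 V F = {U. U \<subseteq> V \<and> finite (V - upper_inv V F U)}"

definition cauchy_family :: "('a \<Rightarrow> 'a set) \<Rightarrow> 'a set set \<Rightarrow> bool" where
  "cauchy_family F \<Phi> \<longleftrightarrow> (\<forall>\<epsilon>::real. \<epsilon> > 0 \<longrightarrow> (\<exists>M\<in>\<Phi>. diam_mf F M < ereal \<epsilon>))"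

end

theory Submission
  imports Defs
begin

text \<open>Every leaf at v is mapped into {v}, so the singleton {v} is a wall for the leaves, and
  when only finitely many points are not leaves it is also a wall in the cofinite sense.
  A singleton has diameter 0, so each of the two families contains sets of arbitrarily
  small diameter.\<close>

lemma dist_mf_self: "dist_mf F v v = 0"
  unfolding dist_mf_def by (rule Least_eq_0) simp

lemma diam_mf_singleton: "diam_mf F {v} = 0"
  unfolding diam_mf_def by (simp add: dist_mf_self zero_ereal_def)

lemma cauchy_family_if_singleton_mem:
  assumes "{v} \<in> \<Phi>"
  shows "cauchy_family F \<Phi>"
  unfolding cauchy_family_def using assms diam_mf_singleton by (metis ereal_less(2))

lemma Leaf_subset_upper_inv_singleton: "Leaf V F v \<subseteq> upper_inv V F {v}"
  unfolding Leaf_def upper_inv_def by auto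

lemma singleton_in_Wall_Leaf: "v \<in> V \<Longrightarrow> {v} \<in> Wall V F (Leaf V F v)"
  unfolding Wall_def by (simp add: Leaf_subset_upper_inv_singleton)

lemma singleton_in_Wall_aleph0:
  assumes "v \<in> V" and "finite (V - Leaf V F v)"
  shows "{v} \<in> Wall_aleph0 V F"
proof -
  have "V - upper_inv V F {v} \<subseteq> V - Leaf V F v"
    using Leaf_subset_upper_inv_singleton[of V F v] by blast
  then show ?thesis
    unfolding Wall_aleph0_def using assms finite_subset by auto
qed

theorem lemma6p14:
  fixes V :: "'a set" and F :: "'a \<Rightarrow> 'a set" and v :: 'a
  assumes "V \<noteq> {}"
    and "simple_graph_mf V F"
    and "connected_mf V F"
    and "v \<in> V"
  shows "cauchy_family F (Wall V F (Leaf V F v)) \<and>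
         (finite (V - Leaf V F v) \<and> infinite V \<and> countable V
           \<longrightarrow> cauchy_family F (Wall_aleph0 V F))"
proof (intro conjI impI)
  show "cauchy_family F (Wall V F (Leaf V F v))"
    by (rule cauchy_family_if_singleton_mem[OF singleton_in_Wall_Leaf[OF assms(4)]])
next
  assume "finite (V - Leaf V F v) \<and> infinite V \<and> countable V"
  then have "{v} \<in> Wall_aleph0 V F"
    using singleton_in_Wall_aleph0[OF assms(4)] by blast
  then show "cauchy_family F (Wall_aleph0 V F)"
    by (rule cauchy_family_if_singleton_mem)
qed

end
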